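(* Let $\lambda_{\max}=1$ and let $F:[0,1]\to\mathbb{R}_+$ be continuously differentiable with $F(0)=0$, such that $F(x)<F^\star$ for all $x\in[0,1)$ and $F'(1)>0$. Then there exists $k\in(0,F'(1)]$ such that $F(x)\le k(x-1)+F(1)$ for all $x\in[0,1]$.
   Context: $F^\star=\sup\{\mathbb{E}_\alpha[F(X)]:\alpha$ a probability measure on $[0,\lambda_{\max}]$, $X\sim\alpha$, $\mathbb{E}_\alpha[X]\le1\}$. *)

theory Defs
  imports "HOL-Probability.Probability"
begin

definition Fstar :: "real \<Rightarrow> (real \<Rightarrow> real) \<Rightarrow> real" where
  "Fstar lmax F = Sup {(\<integral>x. F x \<partial>M) | M.
      prob_space M \<and> sets M = sets (restrict_space borel {0..lmax}) \<and>
      (\<integral>x. x \<partial>M) \<le> 1}"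

end

theory Submission
  imports Defs
begin

text \<open>The admissible measures live on \<open>[0, 1]\<close>, so \<open>F\<^sup>\<star>\<close> is at most the maximum of \<open>F\<close>
  there; the hypothesis \<open>F < F\<^sup>\<star>\<close> on \<open>[0, 1)\<close> therefore forces \<open>F\<close> to attain a strict
  maximum at \<open>1\<close>. Near \<open>1\<close> the graph lies below the line through \<open>(1, F 1)\<close> of slope
  \<open>F' 1 / 2\<close>; away from \<open>1\<close> it stays a positive distance below \<open>F 1\<close>, so a line of even
  smaller positive slope supports the whole graph.\<close>

lemma Fstar_le:
  fixes F :: "real \<Rightarrow> real"
  assumes "0 \<le> lmax" "0 \<le> B" and bound: "\<forall>x\<in>{0..lmax}. F x \<le> B"
  shows "Fstar lmax F \<le> B"
proof -
  let ?S = "{(\<integral>x. F x \<partial>M) | M. prob_space M \<and> sets M = sets (restrict_space borel {0..lmax}) \<and>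
      (\<integral>x. x \<partial>M) \<le> 1}"
  define N where "N = return (restrict_space borel {0..lmax}) 0"
  have "prob_space N"
    unfolding N_def using \<open>0 \<le> lmax\<close> by (intro prob_space_return) auto
  moreover have "(\<integral>x. x \<partial>N) = 0"
    unfolding N_def using \<open>0 \<le> lmax\<close>
    by (subst integral_return) (auto intro: measurable_restrict_space1)
  ultimately have "(\<integral>x. F x \<partial>N) \<in> ?S"
    unfolding N_def by auto
  then have "?S \<noteq> {}"
    by blast
  moreover have "s \<le> B" if s_in: "s \<in> ?S" for s
  proof -
    obtain M where s: "s = (\<integral>x. F x \<partial>M)" and "prob_space M"
      and sets_M: "sets M = sets (restrict_space borel {0..lmax})"
      using s_in by blast
    interpret prob_space M by fact
    have space_M: "space M = {0..lmax}"
      using sets_eq_imp_space_eq[OF sets_M] by simp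
    show ?thesis
    proof (cases "integrable M F")
      case True
      then have "(\<integral>x. F x \<partial>M) \<le> (\<integral>x. B \<partial>M)"
        by (rule integral_mono) (use bound space_M in auto)
      then show ?thesis
        using s by (simp add: prob_space)
    next
      case False
      \<comment> \<open>the Bochner integral is \<open>0\<close> here, which is why \<open>0 \<le> B\<close> is assumed\<close>
      then show ?thesis
        using s \<open>0 \<le> B\<close> by (simp add: not_integrable_integral_eq)
    qed
  qed
  ultimately show ?thesis
    unfolding Fstar_def by (rule cSup_least)
qed

lemma below_Fstar_imp_strict_max_at_1:
  fixes F :: "real \<Rightarrow> real"
  assumes contF: "continuous_on {0..1} F"
    and nonneg: "\<forall>x\<in>{0..1}. F x \<ge> 0"
    and below: "\<forall>x\<in>{0..<1}. F x < Fstar 1 F"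
  shows "\<forall>x\<in>{0..<1}. F x < F 1"
proof -
  obtain x0 where x0: "x0 \<in> {0..1}" and max: "\<forall>y\<in>{0..1}. F y \<le> F x0"
    using continuous_attains_sup[OF compact_Icc _ contF] by force
  have Fstar_le_max: "Fstar 1 F \<le> F x0"
    using nonneg x0 max by (intro Fstar_le) auto
  have "x0 = 1"
  proof (rule ccontr)
    assume "x0 \<noteq> 1"
    then have "F x0 < Fstar 1 F"
      using below x0 by auto
    then show False
      using Fstar_le_max by simp
  qed
  then show ?thesis
    using below Fstar_le_max by fastforce
qed

lemma continuous_on_compact_uniformly_below:
  fixes f :: "'a::topological_space \<Rightarrow> real"
  assumes "compact K" "continuous_on K f" "\<forall>x\<in>K. f x < M"
  shows "\<exists>c>0. \<forall>x\<in>K. f x \<le> M - c"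
proof (cases "K = {}")
  case False
  then obtain x0 where "x0 \<in> K" "\<forall>x\<in>K. f x \<le> f x0"
    using continuous_attains_sup assms(1,2) by blast
  then show ?thesis
    using assms(3) by (intro exI[of _ "M - f x0"]) auto
qed (auto intro: exI[of _ 1])

lemma has_real_derivative_imp_below_line_left:
  fixes f :: "real \<Rightarrow> real"
  assumes "(f has_real_derivative D) (at b within S)" "E < D"
  shows "\<exists>d>0. \<forall>y\<in>S. b - d < y \<and> y < b \<longrightarrow> f y \<le> f b + E * (y - b)"
proof -
  have "((\<lambda>y. (f y - f b) / (y - b)) \<longlongrightarrow> D) (at b within S)"
    using assms(1) by (simp add: has_field_derivative_iff)
  then have "\<forall>\<^sub>F y in at b within S. (f y - f b) / (y - b) > E"
    using assms(2) by (rule order_tendstoD)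
  then obtain d where "d > 0"
    and quotient: "\<forall>y\<in>S. y \<noteq> b \<and> dist y b < d \<longrightarrow> (f y - f b) / (y - b) > E"
    unfolding eventually_at by blast
  have "f y \<le> f b + E * (y - b)" if "y \<in> S" "b - d < y" "y < b" for y
  proof -
    have "(f y - f b) / (y - b) > E"
      using quotient that by (auto simp: dist_real_def)
    then show ?thesis
      using \<open>y < b\<close> by (simp add: neg_less_divide_eq)
  qed
  then show ?thesis
    using \<open>d > 0\<close> by blast
qed

text \<open>The slope \<open>k\<close> is the smaller of \<open>D / 2\<close>, which works near \<open>b\<close>, and
  \<open>c / (b - a)\<close>, where \<open>c\<close> is the gap between \<open>f b\<close> and \<open>f\<close> away from \<open>b\<close>.\<close>

lemma supporting_line_at_strict_right_max:
  fixes f :: "real \<Rightarrow> real"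
  assumes "a < b"
    and cont: "continuous_on {a..b} f"
    and strict_max: "\<forall>x\<in>{a..<b}. f x < f b"
    and deriv: "(f has_real_derivative D) (at b within {a..b})"
    and "D > 0"
  shows "\<exists>k. 0 < k \<and> k \<le> D \<and> (\<forall>x\<in>{a..b}. f x \<le> k * (x - b) + f b)"
proof -
  obtain d where "d > 0"
    and near: "\<forall>y\<in>{a..b}. b - d < y \<and> y < b \<longrightarrow> f y \<le> f b + D / 2 * (y - b)"
    using has_real_derivative_imp_below_line_left[OF deriv, of "D / 2"] \<open>D > 0\<close> by auto
  define a' where "a' = max a (b - d / 2)"
  have "a' < b"
    using \<open>a < b\<close> \<open>d > 0\<close> unfolding a'_def by auto
  have "continuous_on {a..a'} f" "\<forall>x\<in>{a..a'}. f x < f b"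
    using cont strict_max \<open>a' < b\<close> by (auto elim: continuous_on_subset)
  then obtain c where "c > 0" and far: "\<forall>x\<in>{a..a'}. f x \<le> f b - c"
    using continuous_on_compact_uniformly_below[OF compact_Icc] by blast
  define k where "k = min (c / (b - a)) (D / 2)"
  have "k \<le> D / 2"
    unfolding k_def by (rule min.cobounded2)
  have "0 < k" "k \<le> D"
    using \<open>c > 0\<close> \<open>a < b\<close> \<open>D > 0\<close> \<open>k \<le> D / 2\<close> unfolding k_def by auto
  moreover have "f x \<le> k * (x - b) + f b" if x: "x \<in> {a..b}" for x
  proof (cases "x \<le> a'")
    case True
    have "k * (b - x) \<le> c / (b - a) * (b - a)"
      using x \<open>0 < k\<close> unfolding k_def by (intro mult_mono) auto
    also have "\<dots> = c"
      using \<open>a < b\<close> by simp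
    finally have "k * (x - b) \<ge> - c"
      by (simp add: algebra_simps)
    moreover have "f x \<le> f b - c"
      using far x True by auto
    ultimately show ?thesis
      by linarith
  next
    case False
    show ?thesis
    proof (cases "x = b")
      case False
      then have "f x \<le> f b + D / 2 * (x - b)"
        using near x \<open>\<not> x \<le> a'\<close> unfolding a'_def by auto
      moreover have "D / 2 * (x - b) \<le> k * (x - b)"
        using x False \<open>k \<le> D / 2\<close> by (intro mult_right_mono_neg) auto
      ultimately show ?thesis
        by linarith
    qed simp
  qed
  ultimately show ?thesis
    by blast
qed

theorem lemmaA1:
  fixes F F' :: "real \<Rightarrow> real"
  assumes deriv: "\<forall>x\<in>{0..1}. (F has_real_derivative F' x) (at x within {0..1})"
    and cont_deriv: "continuous_on {0..1} F'"
    and nonneg: "\<forall>x\<in>{0..1}. F x \<ge> 0"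
    and F0: "F 0 = 0"
    and below: "\<forall>x\<in>{0..<1}. F x < Fstar 1 F"
    and pos: "F' 1 > 0"
  shows "\<exists>k. 0 < k \<and> k \<le> F' 1 \<and> (\<forall>x\<in>{0..1}. F x \<le> k * (x - 1) + F 1)"
proof -
  have contF: "continuous_on {0..1} F"
    using deriv by (intro DERIV_continuous_on) auto
  have "\<forall>x\<in>{0..<1}. F x < F 1"
    using below_Fstar_imp_strict_max_at_1[OF contF nonneg below] .
  then show ?thesis
    using supporting_line_at_strict_right_max[OF _ contF] deriv pos by simp
qed

end
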